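(* Let $\{x_k\}$ be generated by the Subgradient-InexP method with Polyak's stepsize rule, under the standing assumptions (in particular $\Omega^*\neq\varnothing$). Then for every $x\in\Omega^*$ and every $k=0,1,\dots$, $$\|x_{k+1}-x\|^2\le\|x_k-x\|^2-\underline\beta\,\frac{[f(x_k)-f^*]^2}{\|s_k\|^2}.$$
   Context: Problem: minimize a convex $f:\mathbb{R}^n\to\mathbb{R}$ over a nonempty closed convex $C\subset\mathbb{R}^n$; $f^*:=\inf_{x\in C}f(x)$, $\Omega^*$ the set of minimizers. For $\epsilon\ge0$, $\partial_\epsilon f(x):=\{s: f(y)\ge f(x)+\langle s,y-x\rangle-\epsilon\ \forall y\}$. Relative error tolerance function: any $\varphi_{\gamma,\theta,\lambda}:(\mathbb{R}^n)^3\to[0,\infty)$ with $\varphi_{\gamma,\theta,\lambda}(u,v,w)\le\gamma\|v-u\|^2+\theta\|w-v\|^2+\lambda\|w-u\|^2$; for $u\in C$, $\mathcal{P}_C(\varphi_{\gamma,\theta,\lambda},u,v):=\{w\in C:\langle v-w,z-w\rangle\le\varphi_{\gamma,\theta,\lambda}(u,v,w)\ \forall z\in C\}$. Subgradient-InexP method: $x_0\in C$; at iteration $k$, if $0\in\partial f(x_k)$ stop; otherwise choose nonzero $s_k\in\partial_{\epsilon_k}f(x_k)$, stepsize $t_k>0$, and $x_{k+1}\in\mathcal{P}_C(\varphi_{\gamma_k,\theta_k,\lambda_k},x_k,x_k-t_ks_k)$. Standing assumptions: $\gamma_k\in[0,\bar\gamma)$, $\theta_k\in[0,\bar\theta)$,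 $\lambda_k\in[0,\bar\lambda)$ with $\bar\gamma\ge0$, $\bar\theta,\bar\lambda\in[0,1/2)$; the sequence is infinite. Let $\nu:=\frac{1+2\bar\gamma}{1-2\bar\lambda}$. Polyak's stepsize rule: $\Omega^*\neq\varnothing$, $f^*>-\infty$ known; $\mu\ge0$, $\underline\beta>0$, $\bar\beta>0$; $\{\epsilon_k\}$ nonincreasing, $0<\underline\beta\le\beta_k\le\bar\beta<\frac{1}{2\mu+\nu}$ and $0<\epsilon_k\le\mu\beta_k[f(x_k)-f^*]$ for all $k$; $t_k:=\beta_k\frac{f(x_k)-f^*}{\|s_k\|^2}$. *)

theory Defs
  imports "HOL-Analysis.Analysis"
begin

definition eps_subdiff :: "('a::real_inner \<Rightarrow> real) \<Rightarrow> real \<Rightarrow> 'a \<Rightarrow> 'a set" where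
  "eps_subdiff f \<epsilon> x = {s. \<forall>y. f y \<ge> f x + inner s (y - x) - \<epsilon>}"

definition rel_err_tol :: "real \<Rightarrow> real \<Rightarrow> real \<Rightarrow> ('a::real_normed_vector \<Rightarrow> 'a \<Rightarrow> 'a \<Rightarrow> real) \<Rightarrow> bool" where
  "rel_err_tol \<gamma> \<theta> l \<phi> \<longleftrightarrow>
     (\<forall>u v w. 0 \<le> \<phi> u v w \<and>
        \<phi> u v w \<le> \<gamma> * (norm (v - u))\<^sup>2 + \<theta> * (norm (w - v))\<^sup>2 + l * (norm (w - u))\<^sup>2)"

definition inexact_proj :: "'a::real_inner set \<Rightarrow> ('a \<Rightarrow> 'a \<Rightarrow> 'a \<Rightarrow> real) \<Rightarrow> 'a \<Rightarrow> 'a \<Rightarrow> 'a set" where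
  "inexact_proj C \<phi> u v = {w \<in> C. \<forall>z\<in>C. inner (v - w) (z - w) \<le> \<phi> u v w}"

end

theory Submission
  imports Defs
begin

text \<open>
  One step of the method moves from \<open>u = x\<^sub>k\<close> to an inexact projection \<open>w\<close> of
  \<open>v = u - t s\<close>. Testing the defining variational inequality of \<open>w\<close> with \<open>z = u\<close>
  bounds \<open>\<parallel>w - u\<parallel>\<^sup>2\<close> by \<open>\<parallel>v - u\<parallel>\<^sup>2\<close>; testing it with a minimiser \<open>z = y\<close> then gives
  \<open>\<parallel>w - y\<parallel>\<^sup>2 \<le> \<parallel>v - y\<parallel>\<^sup>2 + (\<nu> - 1) t\<^sup>2 \<parallel>s\<parallel>\<^sup>2\<close>. Expanding \<open>\<parallel>v - y\<parallel>\<^sup>2\<close> and using the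
  \<open>\<epsilon>\<close>-subgradient inequality, the decrease is a quadratic in Polyak's step
  \<open>t = \<beta> (f u - f\<^sup>*) / \<parallel>s\<parallel>\<^sup>2\<close>, namely \<open>\<beta> (2 - \<beta> (2\<mu> + \<nu>)) (f u - f\<^sup>*)\<^sup>2 / \<parallel>s\<parallel>\<^sup>2\<close>,
  and \<open>\<beta> (2\<mu> + \<nu>) \<le> 1\<close> makes it at least \<open>\<beta> (f u - f\<^sup>*)\<^sup>2 / \<parallel>s\<parallel>\<^sup>2\<close>.
\<close>

lemma norm_sq_le_of_relative_error_ineqs:
  fixes u v w y :: "'a::real_inner" and g th l :: real
  defines "b \<equiv> g * (norm (v - u))\<^sup>2 + th * (norm (w - v))\<^sup>2 + l * (norm (w - u))\<^sup>2"
  assumes at_y: "inner (v - w) (y - w) \<le> b"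
    and at_u: "inner (v - w) (u - w) \<le> b"
    and g: "0 \<le> g" and th: "th \<le> 1/2" and l: "0 \<le> l" "l < 1/2"
  shows "(norm (w - y))\<^sup>2 \<le> (norm (v - y))\<^sup>2 + ((1 + 2*g) / (1 - 2*l) - 1) * (norm (v - u))\<^sup>2"
proof -
  define P where "P = (norm (w - v))\<^sup>2"
  define Q where "Q = (norm (v - u))\<^sup>2"
  define R where "R = (norm (w - u))\<^sup>2"
  have "(norm (w - y))\<^sup>2 = (norm (v - y))\<^sup>2 - P + 2 * inner (v - w) (y - w)"
    unfolding P_def power2_norm_eq_inner
    by (simp add: inner_diff_left inner_diff_right inner_commute algebra_simps)
  with at_y have y_bound: "(norm (w - y))\<^sup>2 \<le> (norm (v - y))\<^sup>2 - (1 - 2*th) * P + 2*g*Q + 2*l*R"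
    unfolding b_def P_def Q_def R_def by (simp add: algebra_simps)
  have "2 * inner (v - w) (u - w) = P + R - Q"
    unfolding P_def Q_def R_def power2_norm_eq_inner
    by (simp add: inner_diff_left inner_diff_right inner_commute algebra_simps)
  with at_u have R_bound: "(1 - 2*l) * R \<le> (1 + 2*g) * Q - (1 - 2*th) * P"
    unfolding b_def P_def Q_def R_def by (simp add: algebra_simps)
  have "(1 - 2*th) * P \<ge> 0"
    using th unfolding P_def by simp
  moreover have "2*l*((1 - 2*l) * R) \<le> 2*l*((1 + 2*g) * Q - (1 - 2*th) * P)"
    using R_bound l by (intro mult_left_mono) auto
  ultimately have "(1 - 2*l) * (- (1 - 2*th) * P + 2*g*Q + 2*l*R) \<le> (2*g + 2*l) * Q"
    by (simp add: algebra_simps)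
  with l have "- (1 - 2*th) * P + 2*g*Q + 2*l*R \<le> (2*g + 2*l) * Q / (1 - 2*l)"
    by (simp add: pos_le_divide_eq mult.commute)
  also have "\<dots> = ((1 + 2*g) / (1 - 2*l) - 1) * Q"
    using l by (simp add: field_simps)
  finally show ?thesis
    using y_bound unfolding Q_def by linarith
qed

lemma inexact_proj_norm_sq_le:
  fixes u v w y :: "'a::real_inner"
  assumes w: "w \<in> inexact_proj C \<phi> u v"
    and \<phi>: "rel_err_tol g th l \<phi>"
    and u: "u \<in> C" and y: "y \<in> C"
    and g: "0 \<le> g" and th: "th \<le> 1/2" and l: "0 \<le> l" "l < 1/2"
  shows "(norm (w - y))\<^sup>2 \<le> (norm (v - y))\<^sup>2 + ((1 + 2*g) / (1 - 2*l) - 1) * (norm (v - u))\<^sup>2"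
proof (rule norm_sq_le_of_relative_error_ineqs[OF _ _ g th l])
  have "\<phi> u v w \<le> g * (norm (v - u))\<^sup>2 + th * (norm (w - v))\<^sup>2 + l * (norm (w - u))\<^sup>2"
    using \<phi> unfolding rel_err_tol_def by blast
  then show "inner (v - w) (y - w) \<le> \<dots>" and "inner (v - w) (u - w) \<le> \<dots>"
    using w u y unfolding inexact_proj_def by fastforce+
qed

lemma eps_subdiff_inner_ge:
  assumes "s \<in> eps_subdiff f \<epsilon> u"
  shows "f u - f y - \<epsilon> \<le> inner s (u - y)"
proof -
  have "f y \<ge> f u + inner s (y - u) - \<epsilon>"
    using assms unfolding eps_subdiff_def by blast
  moreover have "inner s (y - u) = - inner s (u - y)"
    by (simp add: inner_diff_right)
  ultimately show ?thesis by linarith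
qed

lemma norm_sq_diff_scaleR:
  fixes u s y :: "'a::real_inner"
  shows "(norm (u - t *\<^sub>R s - y))\<^sup>2 = (norm (u - y))\<^sup>2 - 2 * t * inner s (u - y) + t\<^sup>2 * (norm s)\<^sup>2"
  unfolding power2_norm_eq_inner
  by (simp add: inner_diff_left inner_diff_right inner_commute algebra_simps power2_eq_square)

lemma polyak_step_decrease:
  fixes u w s y :: "'a::real_inner" and f :: "'a \<Rightarrow> real" and g l :: real
  defines "F \<equiv> f u - f y"
    and "\<nu> \<equiv> (1 + 2*g) / (1 - 2*l)"
  assumes w: "w \<in> inexact_proj C \<phi> u (u - t *\<^sub>R s)"
    and \<phi>: "rel_err_tol g th l \<phi>"
    and g: "0 \<le> g" and th: "th \<le> 1/2" and l: "0 \<le> l" "l < 1/2"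
    and u: "u \<in> C" and y: "y \<in> C" and y_min: "\<forall>z\<in>C. f y \<le> f z"
    and s: "s \<in> eps_subdiff f \<epsilon> u" "s \<noteq> 0"
    and \<epsilon>: "\<epsilon> \<le> \<mu> * \<beta> * F"
    and \<beta>: "0 < \<beta>" "\<beta> * (2 * \<mu> + \<nu>) \<le> 1"
    and t: "t = \<beta> * F / (norm s)\<^sup>2"
  shows "(norm (w - y))\<^sup>2 \<le> (norm (u - y))\<^sup>2 - \<beta> * F\<^sup>2 / (norm s)\<^sup>2"
proof -
  define S where "S = (norm s)\<^sup>2"
  have S: "S > 0"
    using s unfolding S_def by simp
  have t_nonneg: "0 \<le> t"
    using y_min u \<beta> S unfolding t F_def S_def[symmetric] by simp
  have "(norm (w - y))\<^sup>2 \<le> (norm (u - y))\<^sup>2 - 2 * t * inner s (u - y) + \<nu> * t\<^sup>2 * S"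
    using inexact_proj_norm_sq_le[OF w \<phi> u y g th l]
    unfolding norm_sq_diff_scaleR \<nu>_def S_def by (simp add: power_mult_distrib algebra_simps)
  also have "\<dots> \<le> (norm (u - y))\<^sup>2 - 2 * t * (F - \<mu> * \<beta> * F) + \<nu> * t\<^sup>2 * S"
    using eps_subdiff_inner_ge[OF s(1), of y] \<epsilon> t_nonneg
    unfolding F_def by (simp add: mult_left_mono)
  also have "\<dots> = (norm (u - y))\<^sup>2 - \<beta> * (2 - \<beta> * (2 * \<mu> + \<nu>)) * (F\<^sup>2 / S)"
    unfolding t S_def[symmetric] using S by (simp add: field_simps power2_eq_square)
  also have "\<dots> \<le> (norm (u - y))\<^sup>2 - \<beta> * (F\<^sup>2 / S)"
  proof -
    have "\<beta> * 1 \<le> \<beta> * (2 - \<beta> * (2 * \<mu> + \<nu>))"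
      using \<beta> by (intro mult_left_mono) auto
    moreover have "0 \<le> F\<^sup>2 / S"
      using S by simp
    ultimately have "\<beta> * (F\<^sup>2 / S) \<le> \<beta> * (2 - \<beta> * (2 * \<mu> + \<nu>)) * (F\<^sup>2 / S)"
      by (metis mult.right_neutral mult_right_mono)
    then show ?thesis
      by linarith
  qed
  finally show ?thesis
    unfolding S_def by simp
qed

theorem mainTheorem7:
  fixes f :: "'a::euclidean_space \<Rightarrow> real"
    and C :: "'a set"
    and x s :: "nat \<Rightarrow> 'a"
    and t \<epsilon> \<beta> \<gamma> \<theta> lam :: "nat \<Rightarrow> real"
    and \<phi> :: "nat \<Rightarrow> 'a \<Rightarrow> 'a \<Rightarrow> 'a \<Rightarrow> real"
    and \<gamma>bar \<theta>bar lbar \<mu> \<beta>low \<beta>up fstar :: real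
  assumes f_convex: "convex_on UNIV f"
    and C_closed: "closed C" and C_convex: "convex C" and C_ne: "C \<noteq> {}"
    and fstar_def: "fstar = (INF y\<in>C. f y)"
    and Omega_ne: "{y \<in> C. \<forall>z\<in>C. f y \<le> f z} \<noteq> {}"
    and gbar: "0 \<le> \<gamma>bar"
    and tbar: "0 \<le> \<theta>bar" "\<theta>bar < 1/2"
    and lbar_bd: "0 \<le> lbar" "lbar < 1/2"
    and gam: "\<And>k. 0 \<le> \<gamma> k \<and> \<gamma> k < \<gamma>bar"
    and the: "\<And>k. 0 \<le> \<theta> k \<and> \<theta> k < \<theta>bar"
    and lam: "\<And>k. 0 \<le> lam k \<and> lam k < lbar"
    and phi: "\<And>k. rel_err_tol (\<gamma> k) (\<theta> k) (lam k) (\<phi> k)"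
    and x0: "x 0 \<in> C"
    and nostop: "\<And>k. 0 \<notin> eps_subdiff f 0 (x k)"
    and s_sub: "\<And>k. s k \<in> eps_subdiff f (\<epsilon> k) (x k)"
    and s_nz: "\<And>k. s k \<noteq> 0"
    and t_pos: "\<And>k. t k > 0"
    and step: "\<And>k. x (Suc k) \<in> inexact_proj C (\<phi> k) (x k) (x k - t k *\<^sub>R s k)"
    and mu: "0 \<le> \<mu>" and blow: "0 < \<beta>low" and bup: "0 < \<beta>up"
    and eps_mono: "decseq \<epsilon>"
    and beta: "\<And>k. \<beta>low \<le> \<beta> k \<and> \<beta> k \<le> \<beta>up"
    and bup_lt: "\<beta>up < 1 / (2 * \<mu> + (1 + 2 * \<gamma>bar) / (1 - 2 * lbar))"
    and eps: "\<And>k. 0 < \<epsilon> k \<and> \<epsilon> k \<le> \<mu> * \<beta> k * (f (x k) - fstar)"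
    and polyak: "\<And>k. t k = \<beta> k * (f (x k) - fstar) / (norm (s k))\<^sup>2"
  shows "\<forall>y \<in> {y \<in> C. \<forall>z\<in>C. f y \<le> f z}. \<forall>k.
           (norm (x (Suc k) - y))\<^sup>2
             \<le> (norm (x k - y))\<^sup>2 - \<beta>low * (f (x k) - fstar)\<^sup>2 / (norm (s k))\<^sup>2"
proof (intro ballI allI)
  fix y k
  assume "y \<in> {y \<in> C. \<forall>z\<in>C. f y \<le> f z}"
  then have y: "y \<in> C" and y_min: "\<forall>z\<in>C. f y \<le> f z" by auto
  have fstar: "fstar = f y"
    unfolding fstar_def by (rule cInf_eq_minimum) (use y y_min in auto)
  have x_in_C: "x n \<in> C" for n
    by (induction n) (use x0 step in \<open>auto simp: inexact_proj_def\<close>)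
  define \<nu> where "\<nu> = (1 + 2 * \<gamma>bar) / (1 - 2 * lbar)"
  have "0 < 2 * \<mu> + \<nu>"
    using mu gbar lbar_bd unfolding \<nu>_def by (simp add: add_nonneg_pos)
  with bup_lt have "\<beta>up * (2 * \<mu> + \<nu>) < 1"
    unfolding \<nu>_def by (simp add: pos_less_divide_eq)
  moreover have "\<beta> k * (2 * \<mu> + \<nu>) \<le> \<beta>up * (2 * \<mu> + \<nu>)"
    using beta[of k] \<open>0 < 2 * \<mu> + \<nu>\<close> by (intro mult_right_mono) auto
  moreover have "\<beta> k * (2 * \<mu> + (1 + 2 * \<gamma> k) / (1 - 2 * lam k)) \<le> \<beta> k * (2 * \<mu> + \<nu>)"
    unfolding \<nu>_def using gam[of k] lam[of k] lbar_bd beta[of k] blow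
    by (intro mult_left_mono add_left_mono frac_le) auto
  ultimately have "\<beta> k * (2 * \<mu> + (1 + 2 * \<gamma> k) / (1 - 2 * lam k)) \<le> 1"
    by linarith
  then have "(norm (x (Suc k) - y))\<^sup>2 \<le> (norm (x k - y))\<^sup>2 - \<beta> k * (f (x k) - fstar)\<^sup>2 / (norm (s k))\<^sup>2"
    unfolding fstar
    using gam[of k] the[of k] lam[of k] tbar lbar_bd eps[of k] beta[of k] blow polyak[of k]
    by (intro polyak_step_decrease[OF step phi _ _ _ _ x_in_C y y_min s_sub s_nz])
      (auto simp: fstar)
  moreover have "\<beta>low * (f (x k) - fstar)\<^sup>2 / (norm (s k))\<^sup>2 \<le> \<beta> k * (f (x k) - fstar)\<^sup>2 / (norm (s k))\<^sup>2"
    using beta[of k] by (simp add: divide_right_mono mult_right_mono)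
  ultimately show "(norm (x (Suc k) - y))\<^sup>2 \<le> (norm (x k - y))\<^sup>2 - \<beta>low * (f (x k) - fstar)\<^sup>2 / (norm (s k))\<^sup>2"
    by linarith
qed

end
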